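(* Let $\varepsilon\in(0,1]$, let $\mathcal D$ be a distribution on $\mathbb R^d$, let $f:\mathbb R^d\to\{0,1\}$ be measurable, and let $S=\{x_1,\dots,x_N\}\subset\mathbb R^d$. For a matrix $A$ write $\mathcal L(A)=\mathbb E_{x\sim\mathcal D}\sum_{i=1}^N p_{S,A}(x_i,x)\,|f(x_i)-f(x)|$. Then $$\Big|\min_{A\in\mathcal A_\varepsilon}\mathcal L(A)-\inf_{A\in\mathcal A}\mathcal L(A)\Big|\le15\,\varepsilon.$$
   Context: $K_A(x,y)=\frac{1}{1+\|A(x-y)\|_2^2}$ and $p_{S,A}(x_i,x)=\frac{K_A(x_i,x)}{\sum_{j=1}^N K_A(x_j,x)}$. $\mathcal A$ is the set of diagonal $d\times d$ real matrices whose diagonal entries all lie in $[1,2]$. $\mathcal A_\varepsilon$ is the finite set of diagonal $d\times d$ matrices whose diagonal entries all lie in $G_\varepsilon=\{(1+\varepsilon)^k: k\in\mathbb Z_{\ge0},\ (1+\varepsilon)^k\le2\}$. *)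

theory Defs
  imports "HOL-Probability.Probability"
begin

definition kernelK :: "real^'d^'d \<Rightarrow> real^'d \<Rightarrow> real^'d \<Rightarrow> real" where
  "kernelK A x y = 1 / (1 + (norm (A *v (x - y)))\<^sup>2)"

definition pSA :: "(real^'d) set \<Rightarrow> real^'d^'d \<Rightarrow> real^'d \<Rightarrow> real^'d \<Rightarrow> real" where
  "pSA S A xi x = kernelK A xi x / (\<Sum>xj\<in>S. kernelK A xj x)"

definition diag_mats :: "real set \<Rightarrow> (real^'d^'d) set" where
  "diag_mats G = {A. (\<forall>i j. i \<noteq> j \<longrightarrow> A $ i $ j = 0) \<and> (\<forall>i. A $ i $ i \<in> G)}"

definition matsA :: "(real^'d^'d) set" where
  "matsA = diag_mats {1..2}"

definition gridG :: "real \<Rightarrow> real set" where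
  "gridG \<epsilon> = {(1 + \<epsilon>) ^ k | k::nat. (1 + \<epsilon>) ^ k \<le> 2}"

definition matsA_eps :: "real \<Rightarrow> (real^'d^'d) set" where
  "matsA_eps \<epsilon> = diag_mats (gridG \<epsilon>)"

definition lossL :: "(real^'d) measure \<Rightarrow> (real^'d \<Rightarrow> real) \<Rightarrow> (real^'d) set \<Rightarrow> real^'d^'d \<Rightarrow> real" where
  "lossL D f S A = (\<integral>x. (\<Sum>xi\<in>S. pSA S A xi x * \<bar>f xi - f x\<bar>) \<partial>D)"

end

theory Submission
  imports Defs
begin

text \<open>
  Round every diagonal entry \<open>a \<in> [1,2]\<close> of \<open>A \<in> \<A>\<close> down to the grid point \<open>g\<close> with
  \<open>g \<le> a \<le> (1+\<epsilon>) g\<close>. The resulting \<open>B \<in> \<A>\<^sub>\<epsilon>\<close> satisfies \<open>\<parallel>Bv\<parallel> \<le> \<parallel>Av\<parallel> \<le> (1+\<epsilon>)\<parallel>Bv\<parallel>\<close>,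
  hence \<open>K\<^sub>A \<le> K\<^sub>B \<le> (1+\<epsilon>)\<^sup>2 K\<^sub>A\<close>. Multiplying the weights of a weighted mean of \<open>[0,1]\<close>-values
  by factors in \<open>[1,c]\<close> moves the mean by at most \<open>c - 1\<close>; applied pointwise with
  \<open>c = (1+\<epsilon>)\<^sup>2\<close> and integrated, this gives \<open>\<L>(B) \<le> \<L>(A) + (1+\<epsilon>)\<^sup>2 - 1 \<le> \<L>(A) + 3\<epsilon>\<close>.
  Since \<open>\<A>\<^sub>\<epsilon> \<subseteq> \<A>\<close>, the minimum over \<open>\<A>\<^sub>\<epsilon>\<close> dominates the infimum over \<open>\<A>\<close>, and the difference is at most \<open>3\<epsilon>\<close>.
\<close>

definition loss_integrand :: "(real^'d) set \<Rightarrow> (real^'d \<Rightarrow> real) \<Rightarrow> real^'d^'d \<Rightarrow> real^'d \<Rightarrow> real" where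
  "loss_integrand S f A x = (\<Sum>xi\<in>S. pSA S A xi x * \<bar>f xi - f x\<bar>)"

lemma lossL_eq_integral_loss_integrand: "lossL D f S A = (\<integral>x. loss_integrand S f A x \<partial>D)"
  by (simp add: lossL_def loss_integrand_def)

lemma diag_mats_mult_vec_nth:
  assumes "A \<in> diag_mats G"
  shows "(A *v v) $ k = A $ k $ k * v $ k"
proof -
  have "(A *v v) $ k = (\<Sum>j\<in>UNIV. A $ k $ j * v $ j)" by (simp add: matrix_vector_mult_def)
  also have "\<dots> = (\<Sum>j\<in>UNIV. if j = k then A $ k $ k * v $ k else 0)"
    by (rule sum.cong) (use assms in \<open>auto simp: diag_mats_def\<close>)
  finally show ?thesis by simp
qed

lemma norm_diag_mats_mult_vec_power2:
  assumes "A \<in> diag_mats G"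
  shows "(norm (A *v v))\<^sup>2 = (\<Sum>k\<in>UNIV. (A $ k $ k)\<^sup>2 * (v $ k)\<^sup>2)"
  unfolding power2_norm_eq_inner inner_vec_def
  by (simp add: diag_mats_mult_vec_nth[OF assms] power2_eq_square mult_ac)

lemma norm_diag_mats_mult_vec_compare:
  assumes "A \<in> diag_mats G" "B \<in> diag_mats H"
    and "\<And>k. 0 \<le> B $ k $ k" "\<And>k. B $ k $ k \<le> A $ k $ k" "\<And>k. A $ k $ k \<le> c * B $ k $ k"
  shows "(norm (B *v v))\<^sup>2 \<le> (norm (A *v v))\<^sup>2"
    and "(norm (A *v v))\<^sup>2 \<le> c\<^sup>2 * (norm (B *v v))\<^sup>2"
proof -
  have "(B $ k $ k)\<^sup>2 \<le> (A $ k $ k)\<^sup>2" for k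
    using assms(3,4) by (intro power_mono)
  then show "(norm (B *v v))\<^sup>2 \<le> (norm (A *v v))\<^sup>2"
    unfolding norm_diag_mats_mult_vec_power2[OF assms(1)] norm_diag_mats_mult_vec_power2[OF assms(2)]
    by (intro sum_mono mult_right_mono) auto
  have "(A $ k $ k)\<^sup>2 \<le> c\<^sup>2 * (B $ k $ k)\<^sup>2" for k
    using assms(3-5) power_mono[of "A $ k $ k" "c * B $ k $ k" 2]
    by (auto simp: power_mult_distrib order_trans[OF assms(3) assms(4)])
  then show "(norm (A *v v))\<^sup>2 \<le> c\<^sup>2 * (norm (B *v v))\<^sup>2"
    unfolding norm_diag_mats_mult_vec_power2[OF assms(1)] norm_diag_mats_mult_vec_power2[OF assms(2)]
      sum_distrib_left
    by (intro sum_mono) (metis mult.assoc mult_right_mono zero_le_power2)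
qed

lemma finite_diag_mats:
  assumes "finite G"
  shows "finite (diag_mats G :: (real^'d^'d) set)"
proof -
  let ?diag = "\<lambda>h. \<chi> i j. if i = j then h i else (0::real)"
  have "(diag_mats G :: (real^'d^'d) set) \<subseteq> ?diag ` (UNIV \<rightarrow>\<^sub>E G)"
  proof
    fix A :: "real^'d^'d"
    assume A: "A \<in> diag_mats G"
    then have "A = ?diag (\<lambda>i. A $ i $ i)" and "(\<lambda>i. A $ i $ i) \<in> UNIV \<rightarrow>\<^sub>E G"
      by (auto simp: vec_eq_iff diag_mats_def)
    then show "A \<in> ?diag ` (UNIV \<rightarrow>\<^sub>E G)" by (rule image_eqI)
  qed
  then show ?thesis
    by (rule finite_subset) (intro finite_imageI finite_PiE assms; simp)
qed

lemma diag_mats_nonempty: "G \<noteq> {} \<Longrightarrow> diag_mats G \<noteq> {}"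
proof -
  assume "G \<noteq> {}"
  then obtain g where "g \<in> G" by auto
  then have "(\<chi> i j. if i = j then g else 0) \<in> diag_mats G" by (auto simp: diag_mats_def)
  then show ?thesis by auto
qed

lemma diag_mats_mono: "G \<subseteq> H \<Longrightarrow> diag_mats G \<subseteq> diag_mats H"
  by (auto simp: diag_mats_def)

lemma kernelK_pos: "0 < kernelK A y x"
  unfolding kernelK_def by (simp add: add_pos_nonneg)

lemma kernelK_diag_mats_compare:
  assumes "A \<in> diag_mats G" "B \<in> diag_mats H" "1 \<le> c"
    and "\<And>k. 0 \<le> B $ k $ k" "\<And>k. B $ k $ k \<le> A $ k $ k" "\<And>k. A $ k $ k \<le> c * B $ k $ k"
  shows "kernelK A y x \<le> kernelK B y x" and "kernelK B y x \<le> c\<^sup>2 * kernelK A y x"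
proof -
  define t where "t = (norm (A *v (y - x)))\<^sup>2"
  define s where "s = (norm (B *v (y - x)))\<^sup>2"
  have st: "s \<le> t" "t \<le> c\<^sup>2 * s"
    unfolding s_def t_def using norm_diag_mats_mult_vec_compare[OF assms(1,2,4-6)] by auto
  have "0 \<le> s" by (simp add: s_def)
  have "1 \<le> c\<^sup>2" using assms(3) by (simp add: one_le_power)
  then have "1 + t \<le> c\<^sup>2 * (1 + s)" using st by (simp add: algebra_simps)
  then show "kernelK A y x \<le> kernelK B y x" and "kernelK B y x \<le> c\<^sup>2 * kernelK A y x"
    unfolding kernelK_def t_def[symmetric] s_def[symmetric]
    using st \<open>0 \<le> s\<close> by (auto intro: divide_left_mono simp: field_simps)
qed

text \<open>The new mean lies in \<open>[r/c, c r]\<close>, where \<open>r \<le> 1\<close> is the old one.\<close>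
lemma weighted_mean_perturbation:
  fixes w w' g :: "'a \<Rightarrow> real"
  assumes "finite S" "S \<noteq> {}" "1 \<le> c"
    and w: "\<And>i. i \<in> S \<Longrightarrow> 0 < w i" "\<And>i. i \<in> S \<Longrightarrow> w i \<le> w' i" "\<And>i. i \<in> S \<Longrightarrow> w' i \<le> c * w i"
    and g: "\<And>i. i \<in> S \<Longrightarrow> 0 \<le> g i" "\<And>i. i \<in> S \<Longrightarrow> g i \<le> 1"
  shows "\<bar>(\<Sum>i\<in>S. w' i * g i) / sum w' S - (\<Sum>i\<in>S. w i * g i) / sum w S\<bar> \<le> c - 1"
proof -
  define P Q P' Q' where "P = (\<Sum>i\<in>S. w i * g i)" and "Q = sum w S"
    and "P' = (\<Sum>i\<in>S. w' i * g i)" and "Q' = sum w' S"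
  have "0 < Q" unfolding Q_def using assms(1,2) w(1) by (intro sum_pos) auto
  have "0 \<le> P" unfolding P_def using w(1) g(1) by (intro sum_nonneg) (simp add: less_imp_le)
  have "P \<le> Q" unfolding P_def Q_def
    using w(1) g(2) by (intro sum_mono) (simp add: less_imp_le mult_left_le)
  have "P \<le> P'" unfolding P_def P'_def using w(2) g(1) by (intro sum_mono mult_right_mono) auto
  have "P' \<le> c * P" unfolding P_def P'_def sum_distrib_left
    using w(3) g(1) by (intro sum_mono) (metis mult.assoc mult_right_mono)
  have "Q \<le> Q'" unfolding Q_def Q'_def using w(2) by (intro sum_mono)
  have "Q' \<le> c * Q" unfolding Q_def Q'_def sum_distrib_left using w(3) by (intro sum_mono)
  define r where "r = P / Q"
  have "0 \<le> r" "r \<le> 1" unfolding r_def using \<open>0 \<le> P\<close> \<open>P \<le> Q\<close> \<open>0 < Q\<close> by auto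
  have "r / c \<le> P' / Q'"
  proof -
    have "r / c = P / (c * Q)" by (simp add: r_def)
    also have "\<dots> \<le> P / Q'" using \<open>0 < Q\<close> \<open>Q \<le> Q'\<close> \<open>Q' \<le> c * Q\<close> \<open>0 \<le> P\<close>
      by (intro divide_left_mono) auto
    also have "\<dots> \<le> P' / Q'" using \<open>P \<le> P'\<close> \<open>0 < Q\<close> \<open>Q \<le> Q'\<close> by (simp add: divide_right_mono)
    finally show ?thesis .
  qed
  moreover have "P' / Q' \<le> c * r"
  proof -
    have "P' / Q' \<le> c * P / Q'" using \<open>P' \<le> c * P\<close> \<open>0 < Q\<close> \<open>Q \<le> Q'\<close> by (simp add: divide_right_mono)
    also have "\<dots> \<le> c * P / Q" using \<open>0 < Q\<close> \<open>Q \<le> Q'\<close> \<open>0 \<le> P\<close> assms(3)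
      by (intro divide_left_mono) auto
    finally show ?thesis by (simp add: r_def)
  qed
  moreover have "r - r / c \<le> c - 1"
  proof -
    have "r * (c - 1) \<le> c * (c - 1)" using assms(3) \<open>r \<le> 1\<close> by (intro mult_right_mono) auto
    then have "r * (c - 1) / c \<le> c - 1" using assms(3) by (simp add: pos_divide_le_eq mult.commute)
    moreover have "r - r / c = r * (c - 1) / c" using assms(3) by (simp add: field_simps)
    ultimately show ?thesis by simp
  qed
  moreover have "c * r - r \<le> c - 1"
    using assms(3) \<open>r \<le> 1\<close> mult_left_mono[of r 1 "c - 1"] by (simp add: algebra_simps)
  ultimately show ?thesis unfolding P_def[symmetric] Q_def[symmetric] P'_def[symmetric]
      Q'_def[symmetric] r_def[symmetric]
    by linarith
qed

lemma loss_integrand_eq_weighted_mean: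
  "loss_integrand S f A x
    = (\<Sum>xi\<in>S. kernelK A xi x * \<bar>f xi - f x\<bar>) / (\<Sum>xi\<in>S. kernelK A xi x)"
  unfolding loss_integrand_def pSA_def sum_divide_distrib by (simp add: algebra_simps)

lemma abs_diff_le_one_if_zero_one_valued:
  assumes "\<forall>x. f x \<in> {0, 1 :: real}"
  shows "\<bar>f y - f x\<bar> \<le> 1"
  using assms[rule_format, of x] assms[rule_format, of y] by auto

lemma loss_integrand_bounds:
  assumes "finite S" "S \<noteq> {}" "\<forall>x. f x \<in> {0, 1}"
  shows "0 \<le> loss_integrand S f A x" and "loss_integrand S f A x \<le> 1"
proof -
  have "(\<Sum>xi\<in>S. kernelK A xi x * \<bar>f xi - f x\<bar>) \<le> (\<Sum>xi\<in>S. kernelK A xi x)"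
    using abs_diff_le_one_if_zero_one_valued[OF assms(3)]
    by (intro sum_mono) (simp add: kernelK_pos less_imp_le mult_left_le)
  moreover have "0 < (\<Sum>xi\<in>S. kernelK A xi x)"
    using assms(1,2) by (intro sum_pos) (auto simp: kernelK_pos)
  moreover have "0 \<le> (\<Sum>xi\<in>S. kernelK A xi x * \<bar>f xi - f x\<bar>)"
    by (intro sum_nonneg) (simp add: kernelK_pos less_imp_le)
  ultimately show "0 \<le> loss_integrand S f A x" and "loss_integrand S f A x \<le> 1"
    unfolding loss_integrand_eq_weighted_mean by auto
qed

lemma kernelK_borel_measurable: "(\<lambda>x. kernelK A y x) \<in> borel_measurable borel"
proof -
  have "continuous_on UNIV (\<lambda>x. A *v (y - x))"
    by (rule continuous_on_compose2[OF matrix_vector_mult_linear_continuous_on[of UNIV A]])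
      (auto intro: continuous_intros)
  moreover have "1 + (norm (A *v (y - x)))\<^sup>2 \<noteq> 0" for x
    by (metis add_pos_nonneg less_irrefl zero_le_power2 zero_less_one)
  ultimately show ?thesis
    unfolding kernelK_def by (intro borel_measurable_continuous_onI continuous_intros) auto
qed

lemma loss_integrand_borel_measurable:
  "f \<in> borel_measurable borel \<Longrightarrow> loss_integrand S f A \<in> borel_measurable borel"
  unfolding loss_integrand_def pSA_def using kernelK_borel_measurable by measurable

lemma gridG_exponent_le:
  assumes "0 < e" "(1 + e) ^ k \<le> (2::real)"
  shows "k \<le> nat \<lceil>1 / e\<rceil>"
proof -
  have "1 + real k * e \<le> (1 + e) ^ k" using assms by (intro Bernoulli_inequality) auto
  then have "real k \<le> 1 / e" using assms by (simp add: field_simps)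
  then show ?thesis by linarith
qed

lemma finite_gridG: "0 < e \<Longrightarrow> finite (gridG e)"
  by (rule finite_subset[of _ "(\<lambda>k. (1 + e) ^ k) ` {..nat \<lceil>1 / e\<rceil>}"])
    (auto simp: gridG_def dest: gridG_exponent_le)

lemma gridG_subset: "0 < e \<Longrightarrow> gridG e \<subseteq> {1..2}"
  unfolding gridG_def by (auto intro: one_le_power)

lemma gridG_round_down:
  assumes "0 < e" "1 \<le> a" "a \<le> (2::real)"
  obtains g where "g \<in> gridG e" "g \<le> a" "a \<le> (1 + e) * g"
proof -
  define K where "K = {k. (1 + e) ^ k \<le> a}"
  have "finite K" unfolding K_def
    by (rule finite_subset[of _ "{..nat \<lceil>1 / e\<rceil>}"]) (use gridG_exponent_le assms in auto)
  moreover have "0 \<in> K" unfolding K_def using assms by simp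
  ultimately have "Max K \<in> K" "Suc (Max K) \<notin> K"
    by (auto intro: Max_in dest: Max_ge)
  then show ?thesis
    using assms by (intro that[of "(1 + e) ^ Max K"]) (auto simp: K_def gridG_def)
qed

lemma matsA_eps_subset_matsA: "0 < e \<Longrightarrow> matsA_eps e \<subseteq> matsA"
  unfolding matsA_eps_def matsA_def by (intro diag_mats_mono gridG_subset)

lemma finite_matsA_eps: "0 < e \<Longrightarrow> finite (matsA_eps e)"
  unfolding matsA_eps_def by (intro finite_diag_mats finite_gridG)

lemma matsA_eps_nonempty: "0 < e \<Longrightarrow> matsA_eps e \<noteq> {}"
  unfolding matsA_eps_def using gridG_round_down[of e 1]
  by (intro diag_mats_nonempty) (metis empty_iff order_refl one_le_numeral)

lemma matsA_round_down:
  assumes "0 < e" "A \<in> matsA"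
  obtains B where "B \<in> matsA_eps e"
    "\<And>k. 1 \<le> B $ k $ k" "\<And>k. B $ k $ k \<le> A $ k $ k" "\<And>k. A $ k $ k \<le> (1 + e) * B $ k $ k"
proof -
  have "\<exists>g. g \<in> gridG e \<and> g \<le> A $ k $ k \<and> A $ k $ k \<le> (1 + e) * g" for k
  proof -
    have "1 \<le> A $ k $ k" "A $ k $ k \<le> 2" using assms(2) by (auto simp: matsA_def diag_mats_def)
    then show ?thesis using gridG_round_down[OF assms(1)] by metis
  qed
  then obtain g where g: "\<And>k. g k \<in> gridG e" "\<And>k. g k \<le> A $ k $ k" "\<And>k. A $ k $ k \<le> (1 + e) * g k"
    by metis
  define B where "B = (\<chi> i j. if i = j then g i else (0::real))"
  show ?thesis
  proof (rule that)
    show "B \<in> matsA_eps e" using g(1) by (simp add: B_def matsA_eps_def diag_mats_def)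
    show "1 \<le> B $ k $ k" for k using subsetD[OF gridG_subset[OF assms(1)] g(1)] by (simp add: B_def)
  qed (use g in \<open>simp_all add: B_def\<close>)
qed

context
  fixes D :: "(real^'d) measure" and f :: "real^'d \<Rightarrow> real" and S :: "(real^'d) set"
  assumes D: "prob_space D" "sets D = sets borel"
    and f: "f \<in> borel_measurable borel" "\<forall>x. f x \<in> {0, 1}"
    and S: "finite S" "S \<noteq> {}"
begin

lemma integrable_loss_integrand: "integrable D (loss_integrand S f A)"
proof -
  interpret prob_space D by (rule D(1))
  show ?thesis
  proof (rule integrable_const_bound[of _ 1])
    show "loss_integrand S f A \<in> borel_measurable D"
      unfolding measurable_cong_sets[OF D(2) refl] using loss_integrand_borel_measurable[OF f(1)] .
    show "AE x in D. norm (loss_integrand S f A x) \<le> 1"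
      using loss_integrand_bounds[OF S f(2)] by simp
  qed
qed

lemma lossL_nonneg: "0 \<le> lossL D f S A"
  unfolding lossL_eq_integral_loss_integrand
  by (intro integral_nonneg_AE) (simp add: loss_integrand_bounds[OF S f(2)])

lemma lossL_le_of_pointwise:
  assumes "\<And>x. loss_integrand S f B x \<le> loss_integrand S f A x + \<delta>"
  shows "lossL D f S B \<le> lossL D f S A + \<delta>"
proof -
  interpret prob_space D by (rule D(1))
  have "lossL D f S B \<le> (\<integral>x. loss_integrand S f A x + \<delta> \<partial>D)"
    unfolding lossL_eq_integral_loss_integrand
    using assms integrable_loss_integrand by (intro integral_mono) auto
  also have "\<dots> = lossL D f S A + \<delta>"
    unfolding lossL_eq_integral_loss_integrand using integrable_loss_integrand by (simp add: prob_space)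
  finally show ?thesis .
qed

lemma lossL_diag_mats_compare:
  assumes "A \<in> diag_mats G" "B \<in> diag_mats H" "1 \<le> c"
    and "\<And>k. 0 \<le> B $ k $ k" "\<And>k. B $ k $ k \<le> A $ k $ k" "\<And>k. A $ k $ k \<le> c * B $ k $ k"
  shows "lossL D f S B \<le> lossL D f S A + (c\<^sup>2 - 1)"
proof (rule lossL_le_of_pointwise)
  fix x
  have "\<bar>loss_integrand S f B x - loss_integrand S f A x\<bar> \<le> c\<^sup>2 - 1"
    unfolding loss_integrand_eq_weighted_mean
    using kernelK_diag_mats_compare[OF assms] assms(3) abs_diff_le_one_if_zero_one_valued[OF f(2)]
    by (intro weighted_mean_perturbation[OF S]) (auto simp: kernelK_pos one_le_power)
  then show "loss_integrand S f B x \<le> loss_integrand S f A x + (c\<^sup>2 - 1)" by linarith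
qed

lemma lossL_matsA_eps_approx:
  assumes "0 < e" "e \<le> 1" "A \<in> matsA"
  obtains B where "B \<in> matsA_eps e" "lossL D f S B \<le> lossL D f S A + 3 * e"
proof -
  obtain B where B: "B \<in> matsA_eps e"
    "\<And>k. 1 \<le> B $ k $ k" "\<And>k. B $ k $ k \<le> A $ k $ k" "\<And>k. A $ k $ k \<le> (1 + e) * B $ k $ k"
    using matsA_round_down[OF assms(1,3)] by blast
  have "lossL D f S B \<le> lossL D f S A + ((1 + e)\<^sup>2 - 1)"
    using assms B unfolding matsA_def matsA_eps_def
    by (intro lossL_diag_mats_compare) (auto intro: order_trans[OF zero_le_one])
  moreover have "(1 + e)\<^sup>2 - 1 \<le> 3 * e"
    using assms(1,2) by (simp add: power2_eq_square algebra_simps)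
  ultimately show ?thesis using B(1) that by fastforce
qed

end

theorem mainTheorem12:
  fixes \<epsilon> :: real and D :: "(real^'d) measure" and f :: "real^'d \<Rightarrow> real"
    and S :: "(real^'d) set"
  assumes "0 < \<epsilon>" and "\<epsilon> \<le> 1"
    and "prob_space D" and "sets D = sets borel"
    and "f \<in> borel_measurable borel" and "\<forall>x. f x \<in> {0, 1}"
    and "finite S" and "S \<noteq> {}"
  shows "\<bar>Min (lossL D f S ` matsA_eps \<epsilon>) - (INF A\<in>matsA. lossL D f S A)\<bar> \<le> 15 * \<epsilon>"
proof -
  let ?L = "lossL D f S" and ?M = "Min (lossL D f S ` matsA_eps \<epsilon>)"
  have fin: "finite (?L ` matsA_eps \<epsilon>)" and ne: "?L ` matsA_eps \<epsilon> \<noteq> {}"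
    using finite_matsA_eps matsA_eps_nonempty assms(1) by auto
  have bdd: "bdd_below (?L ` matsA)"
    using lossL_nonneg[OF assms(3-8)] by (intro bdd_belowI[of _ 0]) auto
  have "(INF A\<in>matsA. ?L A) \<le> ?M"
    using Min_in[OF fin ne] cINF_lower[OF bdd subsetD[OF matsA_eps_subset_matsA[OF assms(1)]]] by auto
  moreover have "?M - 3 * \<epsilon> \<le> (INF A\<in>matsA. ?L A)"
  proof (rule cINF_greatest)
    show "matsA \<noteq> {}" using matsA_eps_nonempty matsA_eps_subset_matsA assms(1) by blast
    fix A :: "real^'d^'d"
    assume "A \<in> matsA"
    then obtain B where "B \<in> matsA_eps \<epsilon>" "?L B \<le> ?L A + 3 * \<epsilon>"
      using lossL_matsA_eps_approx[OF assms(3-8) assms(1,2)] by metis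
    then show "?M - 3 * \<epsilon> \<le> ?L A" using Min_le[OF fin] by fastforce
  qed
  ultimately show ?thesis using assms(1) by linarith
qed

end
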